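(* Let $0<\alpha\le\frac12$, $0<s_{\min}<s_{\max}\le1$ and $p_{\max}\in(0,1)$, and define $\mu_0,\lambda_k,k_{\min},k_{\max}$ as in the context. Assume the parameters are such that every value handed to an Any-Fit routine by RPAP is at most $1$ (i.e. $p_{\max}s_{\min}\le\mu_0$ and $\ln\frac{1}{1-p_{\max}}\le\lambda_{k_{\min}}$). Let $X_1,\dots,X_n$ be independent items with $X_i\sim\operatorname{Ber}(p_i,s_i)$, $p_i\in(0,1]$, $0<s_i\le s_{\max}$. If RPAP packs them into $M$ bins and an optimal viable packing uses $OPT$ bins, then $$M\le C\cdot OPT+k_{\max}-k_{\min}+3,\qquad C=\frac{1+\alpha}{(1-\alpha)\mu_{\min}},$$ where $\mu_{\min}=\frac12\min\big(p_{\max},\,\mu_0,\,(1-p_{\max})\lambda_{\min}\big)$ and $\lambda_{\min}=\dfrac{1}{\lfloor 1/s_{\max}\rfloor+1}\,Q^{-1}\!\left(\lfloor 1/s_{\max}\rfloor+1,\,1-\alpha\right)$.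
   Context: $X\sim\operatorname{Ber}(p,s)$ means $X=s$ with probability $p$ and $0$ otherwise. Bins have capacity $1$; an assignment of independent items to bins is viable if for every bin the sum $B$ of its items satisfies $\mathbb{P}(B>1)\le\alpha$; $OPT$ is the minimum number of bins in a viable assignment. For integer $k\ge1$, $Q(k,\lambda)=\mathbb{P}(\operatorname{Poi}(\lambda)\le k-1)$, and for $\beta\in(0,1)$, $Q^{-1}(k,\beta)$ is the unique $\lambda>0$ with $Q(k,\lambda)=\beta$. An Any-Fit routine packs real values in $[0,1]$ one by one into bins of capacity 1, keeping each bin's total at most 1 and opening a new bin only if the current value fits into no open bin of that routine. Algorithm RPAP: set $k_{\min}=\lfloor1/s_{\max}\rfloor$, $k_{\max}=\lceil1/s_{\min}\rceil-1$, $\lambda_k=Q^{-1}(k+1,1-\alpha)$ for $k_{\min}\le k\le k_{\max}$, and $\mu_0=\frac{2\alpha+s_{\min}-\sqrt{s_{\min}^2+4\alpha s_{\min}}}{2\alpha}$. It maintains separate Any-Fit routines (disjoint sets of bins): one for "confident" items, one for "minor" items, and one for each $k\in\{k_{\min},\dots,k_{\max}\}$. Items are processed online in order: if $p_i>p_{\max}$ the item is packed by the confident routine with value $s_i$; else if $s_i\le s_{\min}$ it is packed by the minor routine with value $p_is_i/\mu_0$; otherwise, with $k=\lfloor1/s_i\rfloor$, it is packed by routine $k$ with value $\ln\!\big(\frac{1}{1-p_i}\big)/\lambda_k$. $M$ is the total number of bins over all routines. *)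

theory Defs
  imports "HOL-Probability.Probability"
begin

(* An item Ber(p,s) is represented by the pair (p,s). *)
definition item_pmf :: "real \<times> real \<Rightarrow> real pmf" where
  "item_pmf ps = map_pmf (\<lambda>b. if b then snd ps else 0) (bernoulli_pmf (fst ps))"

fun sum_pmf :: "(real \<times> real) list \<Rightarrow> real pmf" where
  "sum_pmf [] = return_pmf 0"
| "sum_pmf (x # xs) = map_pmf (\<lambda>(a, r). a + r) (pair_pmf (item_pmf x) (sum_pmf xs))"

definition bin_items :: "(real \<times> real) list \<Rightarrow> (nat \<Rightarrow> nat) \<Rightarrow> nat \<Rightarrow> (real \<times> real) list" where
  "bin_items items f b = map (\<lambda>i. items ! i) (filter (\<lambda>i. f i = b) [0..<length items])"

definition viable :: "real \<Rightarrow> (real \<times> real) list \<Rightarrow> (nat \<Rightarrow> nat) \<Rightarrow> bool" where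
  "viable \<alpha> items f \<longleftrightarrow>
     (\<forall>b. measure_pmf.prob (sum_pmf (bin_items items f b)) {x. x > 1} \<le> \<alpha>)"

definition num_bins :: "nat \<Rightarrow> (nat \<Rightarrow> nat) \<Rightarrow> nat" where
  "num_bins n f = card (f ` {..<n})"

definition OPT :: "real \<Rightarrow> (real \<times> real) list \<Rightarrow> nat" where
  "OPT \<alpha> items = (LEAST m. \<exists>f. viable \<alpha> items f \<and> num_bins (length items) f = m)"

definition Q :: "nat \<Rightarrow> real \<Rightarrow> real" where
  "Q k lam0 = measure_pmf.prob (poisson_pmf lam0) {..k - 1}"

definition Qinv :: "nat \<Rightarrow> real \<Rightarrow> real" where
  "Qinv k \<beta> = (THE l. l > 0 \<and> Q k l = \<beta>)"

(* Any-Fit packing of the value list vs: item j goes to bin g j; bins are numbered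
   0,1,2,... in order of opening. *)
definition load :: "real list \<Rightarrow> (nat \<Rightarrow> nat) \<Rightarrow> nat \<Rightarrow> nat \<Rightarrow> real" where
  "load vs g j b = (\<Sum>i\<in>{i. i < j \<and> g i = b}. vs ! i)"

definition anyfit :: "real list \<Rightarrow> (nat \<Rightarrow> nat) \<Rightarrow> bool" where
  "anyfit vs g \<longleftrightarrow>
     (\<forall>j < length vs.
        g j \<le> card (g ` {..<j})
      \<and> load vs g j (g j) + vs ! j \<le> 1
      \<and> (g j = card (g ` {..<j}) \<longrightarrow>
           (\<forall>b < card (g ` {..<j}). load vs g j b + vs ! j > 1)))"

datatype rclass = Confident | Minor | Regular nat

definition mu0 :: "real \<Rightarrow> real \<Rightarrow> real" where
  "mu0 \<alpha> smin = (2 * \<alpha> + smin - sqrt (smin ^ 2 + 4 * \<alpha> * smin)) / (2 * \<alpha>)"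

definition kmin :: "real \<Rightarrow> nat" where
  "kmin smax = nat \<lfloor>1 / smax\<rfloor>"

definition kmax :: "real \<Rightarrow> nat" where
  "kmax smin = nat (\<lceil>1 / smin\<rceil> - 1)"

definition lam :: "real \<Rightarrow> nat \<Rightarrow> real" where
  "lam \<alpha> k = Qinv (k + 1) (1 - \<alpha>)"

definition rclass_of :: "real \<Rightarrow> real \<Rightarrow> real \<times> real \<Rightarrow> rclass" where
  "rclass_of pmax smin x =
     (if fst x > pmax then Confident
      else if snd x \<le> smin then Minor
      else Regular (nat \<lfloor>1 / snd x\<rfloor>))"

definition rvalue :: "real \<Rightarrow> real \<Rightarrow> real \<Rightarrow> real \<times> real \<Rightarrow> real" where
  "rvalue \<alpha> pmax smin x =
     (case rclass_of pmax smin x of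
        Confident \<Rightarrow> snd x
      | Minor \<Rightarrow> fst x * snd x / mu0 \<alpha> smin
      | Regular k \<Rightarrow> ln (1 / (1 - fst x)) / lam \<alpha> k)"

definition routine_input :: "real \<Rightarrow> real \<Rightarrow> real \<Rightarrow> (real \<times> real) list \<Rightarrow> rclass \<Rightarrow> real list" where
  "routine_input \<alpha> pmax smin items c =
     map (rvalue \<alpha> pmax smin) (filter (\<lambda>x. rclass_of pmax smin x = c) items)"

definition rclasses :: "real \<Rightarrow> real \<Rightarrow> rclass set" where
  "rclasses smin smax = {Confident, Minor} \<union> Regular ` {kmin smax..kmax smin}"

definition rpap_bins :: "real \<Rightarrow> real \<Rightarrow> real \<Rightarrow> real \<Rightarrow> (real \<times> real) list
                          \<Rightarrow> (rclass \<Rightarrow> nat \<Rightarrow> nat) \<Rightarrow> nat" where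
  "rpap_bins \<alpha> pmax smin smax items G =
     (\<Sum>c\<in>rclasses smin smax. num_bins (length (routine_input \<alpha> pmax smin items c)) (G c))"

definition rpap_run :: "real \<Rightarrow> real \<Rightarrow> real \<Rightarrow> real \<Rightarrow> (real \<times> real) list
                          \<Rightarrow> (rclass \<Rightarrow> nat \<Rightarrow> nat) \<Rightarrow> bool" where
  "rpap_run \<alpha> pmax smin smax items G \<longleftrightarrow>
     (\<forall>c\<in>rclasses smin smax. anyfit (routine_input \<alpha> pmax smin items c) (G c))"

end

theory Submission
  imports Defs
begin

text \<open>Each routine is Any-Fit, so any two of its bins carry total value more than \<open>1\<close> and all
  its bins but one are more than half full: \<open>M \<le> 2 V + (k\<^sub>m\<^sub>a\<^sub>x - k\<^sub>m\<^sub>i\<^sub>n + 3)\<close>, where \<open>V\<close> is the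
  total value handed to the routines. Every item's value is at most \<open>p s / (2 \<mu>\<^sub>m\<^sub>i\<^sub>n)\<close>: for
  confident items because \<open>p > p\<^sub>m\<^sub>a\<^sub>x\<close>, for minor items by construction, and for an item of
  class \<open>k\<close> because \<open>(1 - p) ln (1 / (1 - p)) \<le> p\<close>, \<open>s > 1 / (k + 1)\<close> and
  \<open>\<lambda>\<^sub>k / (k + 1)\<close> is nondecreasing in \<open>k\<close>. The last fact is an inequality between Poisson
  distribution functions, which also needs that the median of \<open>Poi n\<close> is at least \<open>n\<close>.
  Finally a bin overflowing with probability at most \<open>\<alpha>\<close> has expected load at most
  \<open>(1 + \<alpha>) / (1 - \<alpha>)\<close>, so the sum of all \<open>p s\<close> is at most \<open>(1 + \<alpha>) / (1 - \<alpha>) OPT\<close>.\<close>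

section \<open>The Poisson distribution function\<close>

definition poisson_term :: "nat \<Rightarrow> real \<Rightarrow> real" where
  "poisson_term i x = exp (- x) * x ^ i / fact i"

text \<open>Unlike \<open>Q\<close> it avoids the truncated index \<open>n - 1\<close>
  (so \<open>Q 0 = Q 1\<close>) and needs no \<open>x > 0\<close>; the two agree for \<open>n \<ge> 1\<close> and \<open>x > 0\<close>.\<close>
definition poisson_cdf :: "nat \<Rightarrow> real \<Rightarrow> real" where
  "poisson_cdf n x = (\<Sum>i<n. poisson_term i x)"

lemma poisson_cdf_Suc: "poisson_cdf (Suc n) x = poisson_cdf n x + poisson_term n x"
  by (simp add: poisson_cdf_def)

lemma poisson_term_nonneg: "0 \<le> x \<Longrightarrow> 0 \<le> poisson_term i x"
  by (simp add: poisson_term_def)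

lemma poisson_term_pos: "0 < x \<Longrightarrow> 0 < poisson_term i x"
  by (simp add: poisson_term_def)

lemma poisson_term_Suc: "poisson_term (Suc i) x = poisson_term i x * x / real (Suc i)"
  by (simp add: poisson_term_def field_simps del: of_nat_Suc)

lemma has_real_derivative_poisson_term:
  "(poisson_term (Suc i) has_real_derivative poisson_term i x - poisson_term (Suc i) x) (at x)"
proof -
  have pow: "((\<lambda>x. x ^ Suc i) has_real_derivative real (Suc i) * x ^ i) (at x)"
    using DERIV_pow[of "Suc i" x] by simp
  have exp: "((\<lambda>x. exp (- x)) has_real_derivative - exp (- x)) (at x)"
    by (auto intro!: derivative_eq_intros)
  have "((\<lambda>x. exp (- x) * x ^ Suc i / fact (Suc i)) has_real_derivative
      (- exp (- x) * x ^ Suc i + exp (- x) * (real (Suc i) * x ^ i)) / fact (Suc i)) (at x)"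
    using DERIV_cdivide[OF DERIV_mult[OF exp pow], of "fact (Suc i)"] by (simp add: algebra_simps)
  moreover have "(- exp (- x) * x ^ Suc i + exp (- x) * (real (Suc i) * x ^ i)) / fact (Suc i)
      = poisson_term i x - poisson_term (Suc i) x"
    unfolding poisson_term_def by (simp add: field_simps del: of_nat_Suc)
  ultimately show ?thesis
    unfolding poisson_term_def[abs_def] by simp
qed

lemma has_real_derivative_poisson_cdf:
  "(poisson_cdf (Suc m) has_real_derivative - poisson_term m x) (at x)"
proof (induction m)
  case 0
  have "poisson_cdf (Suc 0) = (\<lambda>x. exp (- x))"
    by (auto simp: poisson_cdf_def poisson_term_def)
  then show ?case
    by (auto simp: poisson_term_def intro!: derivative_eq_intros)
next
  case (Suc m)
  have "poisson_cdf (Suc (Suc m)) = (\<lambda>x. poisson_cdf (Suc m) x + poisson_term (Suc m) x)"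
    by (rule ext) (simp add: poisson_cdf_Suc)
  then show ?case
    using DERIV_add[OF Suc has_real_derivative_poisson_term[of m]] by simp
qed

lemma has_real_derivative_poisson_cdf_comp:
  "(g has_real_derivative g') (at x) \<Longrightarrow>
    ((\<lambda>x. poisson_cdf (Suc m) (g x)) has_real_derivative - poisson_term m (g x) * g') (at x)"
  using DERIV_chain2[OF has_real_derivative_poisson_cdf] by simp

lemma isCont_poisson_cdf: "isCont (poisson_cdf n) x"
proof (cases n)
  case 0
  then have "poisson_cdf n = (\<lambda>_. 0)" by (simp add: poisson_cdf_def[abs_def])
  then show ?thesis by simp
next
  case (Suc m)
  then show ?thesis using has_real_derivative_poisson_cdf DERIV_isCont by blast
qed

lemma poisson_cdf_at_0: "1 \<le> n \<Longrightarrow> poisson_cdf n 0 = 1"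
proof (induction n)
  case (Suc n)
  then show ?case
    by (cases "n = 0") (auto simp: poisson_cdf_Suc poisson_term_def poisson_cdf_def)
qed simp

lemma poisson_cdf_strict_antimono:
  assumes "1 \<le> n" "0 \<le> a" "a < b"
  shows "poisson_cdf n b < poisson_cdf n a"
proof -
  obtain m where n: "n = Suc m" using assms(1) by (cases n) auto
  show ?thesis unfolding n
  proof (rule DERIV_neg_imp_decreasing_open[OF assms(3)])
    fix x assume "a < x" "x < b"
    then show "\<exists>y. (poisson_cdf (Suc m) has_real_derivative y) (at x) \<and> y < 0"
      using has_real_derivative_poisson_cdf poisson_term_pos assms(2) by force
  qed (use isCont_poisson_cdf continuous_at_imp_continuous_on in blast)
qed

lemma poisson_cdf_tendsto_0: "(poisson_cdf n \<longlongrightarrow> 0) at_top"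
proof -
  have "((\<lambda>x::real. \<Sum>i<n. x ^ i / exp x / fact i) \<longlongrightarrow> (\<Sum>i<n. 0 / fact i)) at_top"
    by (intro tendsto_sum tendsto_divide tendsto_power_div_exp_0 tendsto_const) simp
  moreover have "poisson_cdf n = (\<lambda>x. \<Sum>i<n. x ^ i / exp x / fact i)"
    by (auto simp: poisson_cdf_def poisson_term_def exp_minus field_simps intro!: sum.cong)
  ultimately show ?thesis by simp
qed

lemma Q_eq_poisson_cdf: "1 \<le> n \<Longrightarrow> 0 < x \<Longrightarrow> Q n x = poisson_cdf n x"
proof -
  assume "1 \<le> n" "0 < x"
  moreover have "{..n - 1} = {..<n}" using \<open>1 \<le> n\<close> by auto
  ultimately show ?thesis
    unfolding Q_def poisson_cdf_def poisson_term_def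
    by (simp add: measure_measure_pmf_finite mult.commute mult.left_commute)
qed

lemma poisson_cdf_le_1: "1 \<le> n \<Longrightarrow> 0 \<le> x \<Longrightarrow> poisson_cdf n x \<le> 1"
  using Q_eq_poisson_cdf[of n x] measure_pmf.prob_le_1[of "poisson_pmf x" "{..n - 1}"]
    poisson_cdf_at_0[of n]
  unfolding Q_def by (cases "x = 0") auto

lemma poisson_cdf_Qinv:
  assumes n: "1 \<le> n" and \<beta>: "0 < \<beta>" "\<beta> < 1"
  shows "0 < Qinv n \<beta>" "poisson_cdf n (Qinv n \<beta>) = \<beta>"
proof -
  obtain X where X: "\<And>x. X \<le> x \<Longrightarrow> poisson_cdf n x < \<beta>"
    using order_tendstoD(2)[OF poisson_cdf_tendsto_0 \<beta>(1)]
    by (auto simp: eventually_at_top_linorder)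
  obtain l where l: "0 \<le> l" "poisson_cdf n l = \<beta>"
    using IVT2[of "poisson_cdf n" "max X 1" \<beta> 0] X[of "max X 1"] poisson_cdf_at_0[OF n]
      isCont_poisson_cdf \<beta> by force
  have "l \<noteq> 0" using l poisson_cdf_at_0[OF n] \<beta> by auto
  have unique: "l' = l" if "0 < l'" "poisson_cdf n l' = \<beta>" for l'
    using poisson_cdf_strict_antimono[OF n, of l' l] poisson_cdf_strict_antimono[OF n, of l l'] l that
    by (cases l' l rule: linorder_cases) auto
  have "\<exists>!l. 0 < l \<and> Q n l = \<beta>"
    using l \<open>l \<noteq> 0\<close> unique Q_eq_poisson_cdf[OF n] by (intro ex1I[of _ l]) auto
  then have "0 < Qinv n \<beta> \<and> Q n (Qinv n \<beta>) = \<beta>"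
    unfolding Qinv_def by (rule theI')
  then show "0 < Qinv n \<beta>" "poisson_cdf n (Qinv n \<beta>) = \<beta>"
    using Q_eq_poisson_cdf[OF n] by auto
qed

section \<open>Monotonicity of \<open>\<lambda>\<^sub>k / (k + 1)\<close>\<close>

lemma two_ln_le_minus_inverse:
  fixes u :: real
  assumes u: "1 \<le> u"
  shows "2 * ln u \<le> u - 1 / u"
proof -
  have "(\<lambda>u. u - 1 / u - 2 * ln u) 1 \<le> (\<lambda>u. u - 1 / u - 2 * ln u) u"
  proof (rule DERIV_nonneg_imp_nondecreasing[OF u])
    fix x :: real assume x: "1 \<le> x" "x \<le> u"
    have "((\<lambda>u. u - 1 / u - 2 * ln u) has_real_derivative 1 + 1 / x\<^sup>2 - 2 / x) (at x)"
      using x by (auto intro!: derivative_eq_intros simp: power2_eq_square field_simps)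
    moreover have "1 + 1 / x\<^sup>2 - 2 / x = (1 - 1 / x)\<^sup>2"
      using x by (simp add: power2_eq_square field_simps)
    ultimately show "\<exists>y. ((\<lambda>u. u - 1 / u - 2 * ln u) has_real_derivative y) (at x) \<and> 0 \<le> y"
      by auto
  qed
  then show ?thesis by simp
qed

lemma poisson_term_mult_le:
  assumes u: "1 \<le> u"
  shows "poisson_term m (real (Suc m) * u) \<le> poisson_term m (real (Suc m) / u) / u\<^sup>2"
proof -
  define N where "N = real (Suc m)"
  have N: "0 < N" and u0: "0 < u" using u by (auto simp: N_def)
  have "u\<^sup>2 = exp (2 * ln u)"
    using u0 exp_of_nat_mult[of 2 "ln u"] by simp
  also have "\<dots> \<le> exp (u - 1 / u)"
    using two_ln_le_minus_inverse[OF u] by simp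
  finally have "u ^ (2 * m + 2) \<le> exp (u - 1 / u) ^ Suc m"
    using power_mono[of "u\<^sup>2" _ "Suc m"] power_mult[of u 2 "Suc m"] by (simp add: mult_2_right)
  also have "\<dots> = exp (N * u - N / u)"
    unfolding N_def exp_of_nat_mult[symmetric] by (simp add: algebra_simps add_divide_distrib)
  finally have "exp (- (N * u)) * u ^ (2 * m + 2) \<le> exp (- (N * u)) * exp (N * u - N / u)"
    by simp
  also have "\<dots> = exp (- (N / u))" by (simp add: exp_add[symmetric])
  finally have B: "exp (- (N * u)) * u ^ (2 * m + 2) \<le> exp (- (N / u))" .
  have "exp (- (N * u)) * (N * u) ^ m * u\<^sup>2 * u ^ m = (exp (- (N * u)) * u ^ (2 * m + 2)) * N ^ m"
    by (simp add: power_mult_distrib power_add power2_eq_square power_mult mult_ac)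
  also have "\<dots> \<le> exp (- (N / u)) * N ^ m"
    using B N by (intro mult_right_mono) auto
  also have "\<dots> = exp (- (N / u)) * (N / u) ^ m * u ^ m"
    using u0 by (simp add: power_divide)
  finally have "exp (- (N * u)) * (N * u) ^ m * u\<^sup>2 \<le> exp (- (N / u)) * (N / u) ^ m"
    using u0 by (simp add: mult_le_cancel_right)
  then show ?thesis
    unfolding poisson_term_def N_def[symmetric] using u0 by (simp add: field_simps)
qed

text \<open>With \<open>F = poisson_cdf n\<close>, the function \<open>u \<mapsto> F (n / u) + F (n * u)\<close> is nondecreasing
  on \<open>[1, \<infinity>)\<close> by \<open>poisson_term_mult_le\<close>, and its limit is at most \<open>1\<close>; so \<open>2 F n \<le> 1\<close>.\<close>
lemma poisson_cdf_mean_le_half: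
  assumes n: "1 \<le> n"
  shows "poisson_cdf n (real n) \<le> 1 / 2"
proof -
  obtain m where nm: "n = Suc m" using n by (cases n) auto
  define N where "N = real n"
  have N: "0 < N" using n by (simp add: N_def)
  have sym: "2 * poisson_cdf n N \<le> 1 + poisson_cdf n (N * U)" if U: "1 \<le> U" for U
  proof -
    define \<Phi> where "\<Phi> = (\<lambda>u. poisson_cdf n (N / u) + poisson_cdf n (N * u))"
    have "\<Phi> 1 \<le> \<Phi> U"
    proof (rule DERIV_nonneg_imp_nondecreasing[OF U])
      fix x :: real assume x: "1 \<le> x" "x \<le> U"
      have "((\<lambda>u. N / u) has_real_derivative - N / x\<^sup>2) (at x)"
        using x by (auto intro!: derivative_eq_intros simp: power2_eq_square field_simps)
      moreover have "((\<lambda>u. N * u) has_real_derivative N) (at x)"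
        by (auto intro!: derivative_eq_intros)
      ultimately have "(\<Phi> has_real_derivative
          - poisson_term m (N / x) * (- N / x\<^sup>2) + - poisson_term m (N * x) * N) (at x)"
        unfolding \<Phi>_def nm by (intro DERIV_add has_real_derivative_poisson_cdf_comp)
      moreover have "poisson_term m (N * x) * N \<le> poisson_term m (N / x) / x\<^sup>2 * N"
        using poisson_term_mult_le[of x m] x N by (intro mult_right_mono) (auto simp: N_def nm)
      then have "0 \<le> - poisson_term m (N / x) * (- N / x\<^sup>2) + - poisson_term m (N * x) * N"
        by (simp add: field_simps)
      ultimately show "\<exists>y. (\<Phi> has_real_derivative y) (at x) \<and> 0 \<le> y" by blast
    qed
    moreover have "poisson_cdf n (N / U) \<le> 1" using U N n by (intro poisson_cdf_le_1) auto
    ultimately show ?thesis by (simp add: \<Phi>_def)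
  qed
  show ?thesis
  proof (rule ccontr)
    assume "\<not> ?thesis"
    then have "0 < 2 * poisson_cdf n N - 1" by (simp add: N_def)
    from order_tendstoD(2)[OF poisson_cdf_tendsto_0 this]
    obtain X where X: "\<And>x. X \<le> x \<Longrightarrow> poisson_cdf n x < 2 * poisson_cdf n N - 1"
      by (auto simp: eventually_at_top_linorder)
    define U where "U = max 1 (X / N)"
    have "X \<le> N * U"
      using N mult_left_mono[of "X / N" U N] by (simp add: U_def)
    then show False using X sym[of U] by (fastforce simp: U_def)
  qed
qed

lemma exp_mult_le_pade:
  fixes x :: real
  assumes x: "0 \<le> x"
  shows "exp x * (1 - x / 2) \<le> 1 + x / 2"
proof -
  define \<Psi> where "\<Psi> = (\<lambda>x::real. exp x * (1 - x / 2) - 1 - x / 2)"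
  have "\<Psi> x \<le> \<Psi> 0"
  proof (rule DERIV_nonpos_imp_nonincreasing[OF x])
    fix y :: real
    have "(\<Psi> has_real_derivative (exp y * (1 - y) - 1) / 2) (at y)"
      unfolding \<Psi>_def by (auto intro!: derivative_eq_intros simp: algebra_simps)
    moreover have "exp y * (1 - y) \<le> exp y * exp (- y)"
      using exp_ge_add_one_self[of "- y"] by (intro mult_left_mono) auto
    then have "(exp y * (1 - y) - 1) / 2 \<le> 0" by (simp add: exp_minus)
    ultimately show "\<exists>d. (\<Psi> has_real_derivative d) (at y) \<and> d \<le> 0" by blast
  qed
  then show ?thesis by (simp add: \<Psi>_def)
qed

lemma poisson_term_shift_le:
  assumes s: "0 \<le> s" "s \<le> 1"
  shows "poisson_term m (real (Suc m) + s)
    \<le> poisson_term m (real (Suc m) + 1) * exp (2 * (1 - s) / (real (Suc m) + 1))"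
proof -
  define N where "N = real (Suc m)"
  have N: "1 \<le> N" by (simp add: N_def)
  define y where "y = - (1 - s) / (N + 1)"
  have y: "0 \<le> 1 + y" using s N by (simp add: y_def field_simps)
  have Ns: "N + s = (N + 1) * (1 + y)" using N by (simp add: y_def field_simps)
  have "(1 + y) ^ m \<le> exp y ^ m"
    by (rule power_mono[OF _ y]) (simp add: add.commute exp_ge_add_one_self)
  also have "\<dots> = exp (real m * y)" by (simp add: exp_of_nat_mult)
  finally have "(N + s) ^ m \<le> (N + 1) ^ m * exp (real m * y)"
    unfolding Ns power_mult_distrib using N by (intro mult_left_mono) auto
  then have "exp (- (N + s)) * (N + s) ^ m \<le> exp (- (N + s)) * ((N + 1) ^ m * exp (real m * y))"
    by (intro mult_left_mono) auto
  also have "\<dots> = exp (- (N + 1)) * (N + 1) ^ m * exp (- (N + s) + real m * y + (N + 1))"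
    by (simp add: exp_add exp_diff exp_minus field_simps)
  also have "- (N + s) + real m * y + (N + 1) = 2 * (1 - s) / (N + 1)"
    using N unfolding y_def N_def by (simp add: field_simps)
  finally show ?thesis
    unfolding poisson_term_def N_def[symmetric] by (simp add: divide_right_mono mult_ac)
qed

text \<open>With \<open>F = poisson_cdf n\<close>, integrating \<open>poisson_term_shift_le\<close> over \<open>[n, n + 1]\<close> bounds
  \<open>F n - F (n + 1)\<close> by a multiple of \<open>exp (2 / (n + 1)) - 1\<close>, which the Pad\'e bound
  \<open>exp_mult_le_pade\<close> turns into the next Poisson term.\<close>
lemma poisson_cdf_mean_le_Suc:
  assumes n: "1 \<le> n"
  shows "poisson_cdf n (real n) \<le> poisson_cdf (Suc n) (real n + 1)"
proof -
  obtain m where nm: "n = Suc m" using n by (cases n) auto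
  define N where "N = real n"
  have N: "1 \<le> N" using n by (simp add: N_def)
  define c where "c = (N + 1) / 2 * poisson_term m (N + 1)"
  have c: "0 \<le> c" using N by (simp add: c_def poisson_term_nonneg)
  define \<Phi> where "\<Phi> = (\<lambda>s. poisson_cdf n (N + s) - c * exp (2 * (1 - s) / (N + 1)))"
  have "\<Phi> 0 \<le> \<Phi> 1"
  proof (rule DERIV_nonneg_imp_nondecreasing[of 0 1 \<Phi>])
    fix x :: real assume x: "0 \<le> x" "x \<le> 1"
    have "((\<lambda>s. 2 * (1 - s) / (N + 1)) has_real_derivative - 2 / (N + 1)) (at x)"
      using DERIV_cmult[OF DERIV_diff[OF DERIV_const DERIV_ident], of "2 / (N + 1)" 1 x]
      by (simp add: field_simps)
    then have "((\<lambda>s. c * exp (2 * (1 - s) / (N + 1))) has_real_derivative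
        c * (exp (2 * (1 - x) / (N + 1)) * (- 2 / (N + 1)))) (at x)"
      by (intro DERIV_cmult DERIV_chain2[OF DERIV_exp])
    moreover have "((\<lambda>s. N + s) has_real_derivative 1) (at x)"
      by (auto intro!: derivative_eq_intros)
    ultimately have "(\<Phi> has_real_derivative
        - poisson_term m (N + x) * 1 - c * (exp (2 * (1 - x) / (N + 1)) * (- 2 / (N + 1)))) (at x)"
      unfolding \<Phi>_def nm by (intro DERIV_diff has_real_derivative_poisson_cdf_comp)
    moreover have "c * (exp (2 * (1 - x) / (N + 1)) * (- 2 / (N + 1)))
        = - poisson_term m (N + 1) * exp (2 * (1 - x) / (N + 1))"
      using N by (simp add: c_def field_simps)
    then have "0 \<le> - poisson_term m (N + x) * 1 - c * (exp (2 * (1 - x) / (N + 1)) * (- 2 / (N + 1)))"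
      using poisson_term_shift_le[OF x, of m] by (simp add: N_def nm)
    ultimately show "\<exists>y. (\<Phi> has_real_derivative y) (at x) \<and> 0 \<le> y" by blast
  qed simp
  then have D: "poisson_cdf n N - poisson_cdf n (N + 1) \<le> c * (exp (2 / (N + 1)) - 1)"
    by (simp add: \<Phi>_def algebra_simps)
  have "exp (2 / (N + 1)) * (1 - (2 / (N + 1)) / 2) \<le> 1 + (2 / (N + 1)) / 2"
    using N by (intro exp_mult_le_pade) auto
  moreover have "1 - (2 / (N + 1)) / 2 = N / (N + 1)" "1 + (2 / (N + 1)) / 2 = (N + 2) / (N + 1)"
    using N by (simp_all add: field_simps)
  ultimately have "exp (2 / (N + 1)) * N / (N + 1) \<le> (N + 2) / (N + 1)"
    by simp
  then have "exp (2 / (N + 1)) * N \<le> N + 2"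
    using N by (simp add: divide_le_cancel)
  then have "exp (2 / (N + 1)) - 1 \<le> 2 / N" using N by (simp add: field_simps)
  then have "c * (exp (2 / (N + 1)) - 1) \<le> c * (2 / N)" using c by (rule mult_left_mono)
  also have "c * (2 / N) = poisson_term n (N + 1)"
    unfolding c_def nm poisson_term_Suc N_def by (simp add: field_simps)
  finally show ?thesis using D by (simp add: poisson_cdf_Suc N_def)
qed

lemma mult_exp_minus_mono:
  fixes a b :: real
  assumes "0 \<le> a" "a \<le> b" "b \<le> 1"
  shows "a * exp (- a) \<le> b * exp (- b)"
proof (rule DERIV_nonneg_imp_nondecreasing[OF assms(2)])
  fix x assume x: "a \<le> x" "x \<le> b"
  have "((\<lambda>s. s * exp (- s)) has_real_derivative (1 - x) * exp (- x)) (at x)"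
    by (auto intro!: derivative_eq_intros simp: algebra_simps)
  moreover have "0 \<le> (1 - x) * exp (- x)" using x assms by simp
  ultimately show "\<exists>y. ((\<lambda>s. s * exp (- s)) has_real_derivative y) (at x) \<and> 0 \<le> y" by blast
qed

lemma poisson_term_Suc_scaled:
  fixes m :: nat and t :: real
  defines "N \<equiv> real (Suc m)"
  shows "poisson_term (Suc m) ((N + 1) * t) * (N + 1)
     = poisson_term m (N * t) * N * (((N + 1) / N) ^ Suc (Suc m) * (t * exp (- t)))"
proof -
  have N: "0 < N" by (simp add: N_def)
  have f: "fact (Suc m) = N * fact m" by (simp add: N_def)
  have ex: "exp (- ((N + 1) * t)) = exp (- (N * t)) * exp (- t)"
    by (simp add: exp_add[symmetric] algebra_simps)
  have l: "poisson_term (Suc m) ((N + 1) * t) * (N + 1)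
      = exp (- (N * t)) * exp (- t) * ((N + 1) ^ m * (N + 1) * (N + 1)) * (t ^ m * t) / (N * fact m)"
    unfolding poisson_term_def f ex power_mult_distrib power_Suc by (simp add: mult_ac)
  have r: "poisson_term m (N * t) * N * (((N + 1) / N) ^ Suc (Suc m) * (t * exp (- t)))
     = exp (- (N * t)) * (N ^ m * t ^ m) / fact m * N
       * (((N + 1) ^ m * (N + 1) * (N + 1)) / (N ^ m * N * N) * (t * exp (- t)))"
    unfolding poisson_term_def power_mult_distrib power_divide power_Suc by (simp add: mult_ac)
  show ?thesis unfolding l r using N by (simp add: field_simps)
qed

lemma has_real_derivative_poisson_cdf_scaled_diff:
  fixes m :: nat
  defines "N \<equiv> real (Suc m)"
  shows "((\<lambda>t. poisson_cdf (Suc (Suc m)) ((N + 1) * t) - poisson_cdf (Suc m) (N * t))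
    has_real_derivative poisson_term m (N * x) * N * (1 - ((N + 1) / N) ^ Suc (Suc m) * (x * exp (- x))))
    (at x)"
proof -
  have "((\<lambda>t. (N + 1) * t) has_real_derivative N + 1) (at x)"
    "((\<lambda>t. N * t) has_real_derivative N) (at x)"
    by (auto intro!: derivative_eq_intros)
  then have "((\<lambda>t. poisson_cdf (Suc (Suc m)) ((N + 1) * t) - poisson_cdf (Suc m) (N * t))
      has_real_derivative - poisson_term (Suc m) ((N + 1) * x) * (N + 1) - (- poisson_term m (N * x) * N))
      (at x)"
    by (intro DERIV_diff has_real_derivative_poisson_cdf_comp)
  then show ?thesis
    using poisson_term_Suc_scaled[of m x] by (simp add: N_def algebra_simps)
qed

text \<open>As a function of \<open>t\<close>, the difference of the two sides vanishes at \<open>0\<close>, is nonnegative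
  at \<open>1\<close> (\<open>poisson_cdf_mean_le_Suc\<close>), and its derivative has the sign of \<open>1 - c t e\<^sup>-\<^sup>t\<close> for a
  constant \<open>c > 0\<close>; since \<open>t e\<^sup>-\<^sup>t\<close> increases on \<open>[0, 1]\<close>, it first increases, then decreases.\<close>
lemma poisson_cdf_scaled_le_Suc:
  assumes n: "1 \<le> n" and t: "0 \<le> t" "t \<le> 1"
  shows "poisson_cdf n (real n * t) \<le> poisson_cdf (Suc n) ((real n + 1) * t)"
proof -
  obtain m where nm: "n = Suc m" using n by (cases n) auto
  define N where "N = real n"
  have N: "1 \<le> N" using n by (simp add: N_def)
  define c where "c = ((N + 1) / N) ^ Suc (Suc m)"
  have c: "0 \<le> c" using N by (simp add: c_def)
  define h where "h = (\<lambda>t. poisson_cdf (Suc n) ((N + 1) * t) - poisson_cdf n (N * t))"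
  have h': "(h has_real_derivative poisson_term m (N * x) * N * (1 - c * (x * exp (- x)))) (at x)"
    for x
    using has_real_derivative_poisson_cdf_scaled_diff[of m x] by (simp add: h_def c_def N_def nm)
  have weight: "0 \<le> poisson_term m (N * x) * N" if "0 \<le> x" for x
    using N that by (simp add: poisson_term_nonneg)
  have "0 \<le> h t"
  proof (cases "c * (t * exp (- t)) \<le> 1")
    case True
    have "h 0 \<le> h t"
    proof (rule DERIV_nonneg_imp_nondecreasing[OF t(1)])
      fix x assume x: "0 \<le> x" "x \<le> t"
      have "c * (x * exp (- x)) \<le> 1"
        using True mult_left_mono[OF mult_exp_minus_mono[of x t] c] x t by linarith
      then show "\<exists>y. (h has_real_derivative y) (at x) \<and> 0 \<le> y"
        using h' weight[of x] x by fastforce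
    qed
    then show ?thesis using n by (simp add: h_def poisson_cdf_at_0)
  next
    case False
    have "h 1 \<le> h t"
    proof (rule DERIV_nonpos_imp_nonincreasing[OF t(2)])
      fix x assume x: "t \<le> x" "x \<le> 1"
      have "1 \<le> c * (x * exp (- x))"
        using False mult_left_mono[OF mult_exp_minus_mono[of t x] c] x t by linarith
      then show "\<exists>y. (h has_real_derivative y) (at x) \<and> y \<le> 0"
        using h' weight[of x] x t by (fastforce intro: mult_nonneg_nonpos)
    qed
    moreover have "0 \<le> h 1"
      using poisson_cdf_mean_le_Suc[OF n] by (simp add: h_def N_def)
    ultimately show ?thesis by simp
  qed
  then show ?thesis by (simp add: h_def N_def)
qed

text \<open>Since \<open>\<beta> \<ge> 1 / 2\<close>, the median bound gives \<open>Qinv n \<beta> \<le> n\<close>, so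
  \<open>poisson_cdf_scaled_le_Suc\<close> applies with \<open>t = Qinv n \<beta> / n\<close>.\<close>
lemma Qinv_div_le_Suc:
  assumes \<beta>: "1 / 2 \<le> \<beta>" "\<beta> < 1" and n: "1 \<le> n"
  shows "Qinv n \<beta> / real n \<le> Qinv (Suc n) \<beta> / real (Suc n)"
proof -
  define N where "N = real n"
  have N: "1 \<le> N" using n by (simp add: N_def)
  define L where "L = Qinv n \<beta>"
  define L' where "L' = Qinv (Suc n) \<beta>"
  have L: "0 < L" "poisson_cdf n L = \<beta>" using poisson_cdf_Qinv[OF n, of \<beta>] \<beta> by (auto simp: L_def)
  have L': "0 < L'" "poisson_cdf (Suc n) L' = \<beta>"
    using poisson_cdf_Qinv[of "Suc n" \<beta>] \<beta> by (auto simp: L'_def)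
  have "L \<le> N"
  proof (rule ccontr)
    assume "\<not> L \<le> N"
    then have "poisson_cdf n L < poisson_cdf n N"
      using N by (intro poisson_cdf_strict_antimono[OF n]) auto
    then show False using poisson_cdf_mean_le_half[OF n] L \<beta> by (simp add: N_def)
  qed
  define t where "t = L / N"
  have t: "0 \<le> t" "t \<le> 1" and "N * t = L" using L \<open>L \<le> N\<close> N by (auto simp: t_def)
  then have "\<beta> \<le> poisson_cdf (Suc n) ((N + 1) * t)"
    using poisson_cdf_scaled_le_Suc[OF n t] L by (simp add: N_def)
  then have "(N + 1) * t \<le> L'"
    using poisson_cdf_strict_antimono[of "Suc n" L' "(N + 1) * t"] L' by force
  then show ?thesis using N by (simp add: t_def L_def L'_def N_def field_simps)
qed

lemma Qinv_div_mono:
  assumes "1 / 2 \<le> \<beta>" "\<beta> < 1" "1 \<le> n" "n \<le> n'"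
  shows "Qinv n \<beta> / real n \<le> Qinv n' \<beta> / real n'"
  using assms(4,3)
proof (induction n' rule: dec_induct)
  case (step n')
  then show ?case using Qinv_div_le_Suc[OF assms(1,2), of n'] by simp
qed simp

section \<open>Expected load of a viable bin\<close>

definition overflow_prob :: "real \<Rightarrow> (real \<times> real) list \<Rightarrow> real" where
  "overflow_prob a xs = measure_pmf.prob (sum_pmf xs) {y. 1 < a + y}"

definition mean_load :: "(real \<times> real) list \<Rightarrow> real" where
  "mean_load xs = sum_list (map (\<lambda>x. fst x * snd x) xs)"

lemma sum_pmf_Cons_bind:
  "sum_pmf ((p, s) # xs)
    = bind_pmf (bernoulli_pmf p) (\<lambda>b. map_pmf (\<lambda>r. (if b then s else 0) + r) (sum_pmf xs))"
  unfolding sum_pmf.simps item_pmf_def fst_conv snd_conv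
  by (simp add: pair_pmf_def map_pmf_def bind_assoc_pmf bind_return_pmf bind_return_pmf')

lemma overflow_prob_Nil: "overflow_prob a [] = (if 1 < a then 1 else 0)"
  by (simp add: overflow_prob_def)

lemma overflow_prob_nonneg: "0 \<le> overflow_prob a xs"
  by (simp add: overflow_prob_def)

lemma overflow_prob_Cons:
  assumes p: "0 \<le> p" "p \<le> 1"
  shows "overflow_prob a ((p, s) # xs) = p * overflow_prob (a + s) xs + (1 - p) * overflow_prob a xs"
proof -
  define F where "F = (\<lambda>b. map_pmf (\<lambda>r. (if b then s else 0) + r) (sum_pmf xs))"
  have "measure_pmf.prob (F True) {y. 1 < a + y} = overflow_prob (a + s) xs"
    "measure_pmf.prob (F False) {y. 1 < a + y} = overflow_prob a xs"
    unfolding F_def overflow_prob_def by (simp_all add: vimage_def add.assoc)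
  moreover have "emeasure (measure_pmf (bind_pmf (bernoulli_pmf p) F)) {y. 1 < a + y}
      = emeasure (F True) {y. 1 < a + y} * p + emeasure (F False) {y. 1 < a + y} * (1 - p)"
    using p by simp
  ultimately have "ennreal (overflow_prob a ((p, s) # xs))
      = ennreal (overflow_prob (a + s) xs * p + overflow_prob a xs * (1 - p))"
    unfolding overflow_prob_def sum_pmf_Cons_bind F_def[symmetric] using p
    by (simp add: measure_pmf.emeasure_eq_measure ennreal_mult' ennreal_plus)
  then have "overflow_prob a ((p, s) # xs) = overflow_prob (a + s) xs * p + overflow_prob a xs * (1 - p)"
    using p by (subst (asm) ennreal_inj) (auto simp: overflow_prob_def)
  then show ?thesis by (simp add: algebra_simps)
qed

lemma overflow_prob_eq_1:
  assumes "\<forall>x\<in>set xs. 0 \<le> fst x \<and> fst x \<le> 1 \<and> 0 \<le> snd x" "1 < a"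
  shows "overflow_prob a xs = 1"
  using assms
proof (induction xs arbitrary: a)
  case (Cons x xs)
  obtain p s where "x = (p, s)" by (cases x)
  with Cons show ?case by (simp add: overflow_prob_Cons)
qed (simp add: overflow_prob_Nil)

lemma mean_load_nonneg: "\<forall>x\<in>set xs. 0 \<le> fst x \<and> 0 \<le> snd x \<Longrightarrow> 0 \<le> mean_load xs"
  unfolding mean_load_def by (induction xs) auto

text \<open>\<open>a\<close> is the load already in the bin. Condition on the first item; once \<open>a > 1\<close> the
  overflow probability is \<open>1\<close> and the bound is trivial.\<close>
lemma mean_load_le_overflow_prob:
  assumes "\<forall>x\<in>set xs. 0 \<le> fst x \<and> fst x \<le> 1 \<and> 0 \<le> snd x \<and> snd x \<le> 1" "a \<le> 1"
  shows "a + mean_load xs \<le> 1 + overflow_prob a xs * (1 + mean_load xs)"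
  using assms
proof (induction xs arbitrary: a)
  case Nil
  then show ?case by (simp add: overflow_prob_Nil mean_load_def)
next
  case (Cons x ys)
  obtain p s where x: "x = (p, s)" by (cases x)
  have p: "0 \<le> p" "p \<le> 1" and s: "0 \<le> s" "s \<le> 1" using Cons.prems x by auto
  have ys: "\<forall>x\<in>set ys. 0 \<le> fst x \<and> fst x \<le> 1 \<and> 0 \<le> snd x \<and> snd x \<le> 1"
    using Cons.prems by auto
  have "0 \<le> mean_load ys" using ys by (intro mean_load_nonneg) auto
  have taken: "a + s + mean_load ys \<le> 1 + overflow_prob (a + s) ys * (1 + mean_load ys)"
  proof (cases "a + s \<le> 1")
    case True
    then show ?thesis using Cons.IH[OF ys True] by simp
  next
    case False
    then have "overflow_prob (a + s) ys = 1" using ys by (intro overflow_prob_eq_1) auto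
    then show ?thesis using Cons.prems s by simp
  qed
  have absent: "a + mean_load ys \<le> 1 + overflow_prob a ys * (1 + mean_load ys)"
    using Cons.IH[OF ys Cons.prems(2)] .
  have "a + p * s + mean_load ys \<le> 1 + overflow_prob a (x # ys) * (1 + mean_load ys)"
    using mult_left_mono[OF taken p(1)] mult_left_mono[OF absent, of "1 - p"] p
    by (simp add: overflow_prob_Cons x algebra_simps)
  moreover have "overflow_prob a (x # ys) * (1 + mean_load ys)
      \<le> overflow_prob a (x # ys) * (1 + mean_load ys + p * s)"
    using overflow_prob_nonneg p s by (intro mult_left_mono) auto
  ultimately show ?case by (simp add: mean_load_def x algebra_simps)
qed

lemma mean_load_le:
  assumes "\<forall>x\<in>set xs. 0 \<le> fst x \<and> fst x \<le> 1 \<and> 0 \<le> snd x \<and> snd x \<le> 1"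
    and "measure_pmf.prob (sum_pmf xs) {x. 1 < x} \<le> \<alpha>" "\<alpha> < 1"
  shows "mean_load xs \<le> (1 + \<alpha>) / (1 - \<alpha>)"
proof -
  have "overflow_prob 0 xs \<le> \<alpha>" using assms(2) by (simp add: overflow_prob_def)
  moreover have "0 \<le> mean_load xs" using assms(1) by (intro mean_load_nonneg) auto
  ultimately have "overflow_prob 0 xs * (1 + mean_load xs) \<le> \<alpha> * (1 + mean_load xs)"
    by (intro mult_right_mono) auto
  then have "mean_load xs \<le> 1 + \<alpha> * (1 + mean_load xs)"
    using mean_load_le_overflow_prob[OF assms(1), of 0] by simp
  then show ?thesis using assms(3) by (simp add: field_simps)
qed

lemma sum_list_bin_items:
  "sum_list (map w items) = (\<Sum>b\<in>f ` {..<length items}. sum_list (map w (bin_items items f b)))"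
proof -
  define n where "n = length items"
  have bin: "sum_list (map w (bin_items items f b)) = (\<Sum>i\<in>{i\<in>{..<n}. f i = b}. w (items ! i))"
    for b
  proof -
    have "sum_list (map w (bin_items items f b))
        = sum_list (map (\<lambda>i. w (items ! i)) (filter (\<lambda>i. f i = b) [0..<n]))"
      by (simp add: bin_items_def n_def o_def)
    also have "\<dots> = (\<Sum>i\<in>set (filter (\<lambda>i. f i = b) [0..<n]). w (items ! i))"
      by (rule sum_list_distinct_conv_sum_set) simp
    also have "set (filter (\<lambda>i. f i = b) [0..<n]) = {i\<in>{..<n}. f i = b}" by auto
    finally show ?thesis .
  qed
  have "sum_list (map w items) = (\<Sum>i<n. w (items ! i))"
    by (simp add: sum_list_sum_nth n_def atLeast0LessThan)
  also have "\<dots> = (\<Sum>b\<in>f ` {..<n}. \<Sum>i\<in>{i\<in>{..<n}. f i = b}. w (items ! i))"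
    by (rule sum.image_gen) simp
  finally show ?thesis unfolding bin n_def .
qed

lemma viable_id:
  assumes "\<forall>x \<in> set items. 0 \<le> fst x \<and> fst x \<le> 1 \<and> snd x \<le> 1" "0 \<le> \<alpha>"
  shows "viable \<alpha> items id"
  unfolding viable_def
proof
  fix b
  have single: "filter (\<lambda>i. i = b) [0..<n] = (if b < n then [b] else [])" for n
    by (induction n) auto
  have "overflow_prob 0 (bin_items items id b) = 0"
  proof (cases "b < length items")
    case True
    obtain p s where x: "items ! b = (p, s)" by (cases "items ! b")
    have "items ! b \<in> set items" using True by simp
    then have "0 \<le> p" "p \<le> 1" "s \<le> 1" using assms x by auto
    then show ?thesis
      using True by (simp add: bin_items_def single x overflow_prob_Cons overflow_prob_Nil)
  next
    case False
    then show ?thesis by (simp add: bin_items_def single overflow_prob_Nil)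
  qed
  then show "measure_pmf.prob (sum_pmf (bin_items items id b)) {x. 1 < x} \<le> \<alpha>"
    using assms by (simp add: overflow_prob_def)
qed

lemma OPT_attained:
  assumes "viable \<alpha> items f"
  obtains f where "viable \<alpha> items f" "num_bins (length items) f = OPT \<alpha> items"
  using assms LeastI_ex[of "\<lambda>m. \<exists>f. viable \<alpha> items f \<and> num_bins (length items) f = m"]
  unfolding OPT_def by blast

lemma mean_load_le_OPT:
  assumes items: "\<forall>x \<in> set items. 0 \<le> fst x \<and> fst x \<le> 1 \<and> 0 \<le> snd x \<and> snd x \<le> 1"
    and \<alpha>: "0 \<le> \<alpha>" "\<alpha> < 1"
  shows "mean_load items \<le> (1 + \<alpha>) / (1 - \<alpha>) * real (OPT \<alpha> items)"
proof -
  obtain f where f: "viable \<alpha> items f" "num_bins (length items) f = OPT \<alpha> items"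
    using OPT_attained viable_id items \<alpha> by (metis (no_types, lifting))
  have "mean_load items = (\<Sum>b\<in>f ` {..<length items}. mean_load (bin_items items f b))"
    unfolding mean_load_def by (rule sum_list_bin_items)
  also have "\<dots> \<le> (\<Sum>b\<in>f ` {..<length items}. (1 + \<alpha>) / (1 - \<alpha>))"
  proof (rule sum_mono)
    fix b
    have "set (bin_items items f b) \<subseteq> set items" by (auto simp: bin_items_def)
    then show "mean_load (bin_items items f b) \<le> (1 + \<alpha>) / (1 - \<alpha>)"
      using mean_load_le[of "bin_items items f b" \<alpha>] items f(1) \<alpha> unfolding viable_def by auto
  qed
  also have "\<dots> = (1 + \<alpha>) / (1 - \<alpha>) * real (OPT \<alpha> items)"
    using f(2) by (simp add: num_bins_def)
  finally show ?thesis .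
qed

section \<open>Any-Fit packings\<close>

lemma anyfit_image_lessThan:
  assumes "anyfit vs g" "j \<le> length vs"
  shows "g ` {..<j} = {..<card (g ` {..<j})}"
  using assms(2)
proof (induction j)
  case (Suc j)
  define c where "c = card (g ` {..<j})"
  have IH: "g ` {..<j} = {..<c}" using Suc by (simp add: c_def)
  have "g j \<le> c" using assms(1) Suc.prems unfolding anyfit_def c_def by auto
  then have "g ` {..<Suc j} = {..<c} \<or> g ` {..<Suc j} = {..<Suc c}"
    using IH by (cases "g j = c") (auto simp: lessThan_Suc)
  then show ?case by (metis card_lessThan)
qed simp

lemma load_le_load:
  assumes "\<forall>v\<in>set vs. 0 \<le> v" "j \<le> length vs"
  shows "load vs g j b \<le> load vs g (length vs) b"
  unfolding load_def using assms by (intro sum_mono2) auto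

lemma load_nonneg: "\<forall>v\<in>set vs. 0 \<le> v \<Longrightarrow> 0 \<le> load vs g (length vs) b"
  unfolding load_def by (intro sum_nonneg) auto

lemma nth_le_load:
  assumes "\<forall>v\<in>set vs. 0 \<le> v" "j < length vs"
  shows "vs ! j \<le> load vs g (length vs) (g j)"
proof -
  have "vs ! j = (\<Sum>i\<in>{j}. vs ! i)" by simp
  also have "\<dots> \<le> load vs g (length vs) (g j)"
    unfolding load_def using assms by (intro sum_mono2) auto
  finally show ?thesis .
qed

text \<open>The first value put into bin \<open>b'\<close> did not fit into the earlier bin \<open>b\<close>.\<close>
lemma anyfit_load_add_gt_1:
  assumes af: "anyfit vs g" and nn: "\<forall>v\<in>set vs. 0 \<le> v"
    and b: "b < b'" "b' < num_bins (length vs) g"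
  shows "1 < load vs g (length vs) b + load vs g (length vs) b'"
proof -
  define n where "n = length vs"
  have "b' \<in> g ` {..<n}"
    using anyfit_image_lessThan[OF af, of n] b by (auto simp: num_bins_def n_def)
  then have ex: "\<exists>j. j < n \<and> g j = b'" by auto
  define j where "j = (LEAST j. j < n \<and> g j = b')"
  have j: "j < n" "g j = b'" using LeastI_ex[OF ex] by (auto simp: j_def)
  have "b' \<notin> g ` {..<j}"
  proof
    assume "b' \<in> g ` {..<j}"
    then obtain i where "i < j" "g i = b'" by auto
    then show False
      using not_less_Least[of i "\<lambda>j. j < n \<and> g j = b'"] j by (simp add: j_def)
  qed
  moreover have "g ` {..<j} = {..<card (g ` {..<j})}"
    using anyfit_image_lessThan[OF af, of j] j by (simp add: n_def)
  ultimately have "card (g ` {..<j}) \<le> g j" using j by (metis lessThan_iff not_le)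
  moreover have "g j \<le> card (g ` {..<j})" using af j unfolding anyfit_def n_def by auto
  ultimately have "g j = card (g ` {..<j})" by simp
  then have "1 < load vs g j b + vs ! j" using af j b unfolding anyfit_def n_def by auto
  moreover have "load vs g j b \<le> load vs g n b"
    using load_le_load[OF nn, of j g b] j by (simp add: n_def)
  moreover have "vs ! j \<le> load vs g n b'" using nth_le_load[OF nn, of j g] j by (simp add: n_def)
  ultimately show ?thesis by (simp add: n_def)
qed

lemma anyfit_num_bins_le:
  assumes af: "anyfit vs g" and nn: "\<forall>v\<in>set vs. 0 \<le> v"
  shows "real (num_bins (length vs) g) \<le> 2 * sum_list vs + 1"
proof -
  define n where "n = length vs"
  define N where "N = num_bins n g"
  define L where "L = load vs g n"
  have img: "g ` {..<n} = {..<N}"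
    using anyfit_image_lessThan[OF af, of n] by (simp add: N_def num_bins_def n_def)
  define S where "S = {b. b < N \<and> L b \<le> 1 / 2}"
  have "card S \<le> 1"
  proof -
    have "b = b'" if "b \<in> S" "b' \<in> S" for b b'
      using anyfit_load_add_gt_1[OF af nn, of b b'] anyfit_load_add_gt_1[OF af nn, of b' b] that
      by (cases b b' rule: linorder_cases) (auto simp: S_def L_def N_def n_def)
    then show ?thesis by (simp add: card_le_Suc0_iff_eq S_def)
  qed
  then have "real N - 1 \<le> real (card ({..<N} - S))"
    by (subst card_Diff_subset) (auto simp: S_def)
  moreover have "real (card ({..<N} - S)) / 2 = (\<Sum>b\<in>{..<N} - S. 1 / 2)" by simp
  also have "\<dots> \<le> (\<Sum>b\<in>{..<N} - S. L b)" by (intro sum_mono) (auto simp: S_def)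
  also have "\<dots> \<le> (\<Sum>b<N. L b)"
    using load_nonneg[OF nn] by (intro sum_mono2) (auto simp: L_def n_def)
  also have "\<dots> = (\<Sum>b\<in>g ` {..<n}. \<Sum>i\<in>{i\<in>{..<n}. g i = b}. vs ! i)"
    unfolding img L_def load_def by (intro sum.cong) auto
  also have "\<dots> = (\<Sum>i<n. vs ! i)" by (rule sum.image_gen[symmetric]) simp
  also have "\<dots> = sum_list vs" by (simp add: sum_list_sum_nth n_def atLeast0LessThan)
  ultimately show ?thesis by (simp add: N_def n_def)
qed

section \<open>The RPAP bound\<close>

lemma sum_list_filter_classes:
  assumes "finite C" "\<forall>x\<in>set xs. cls x \<in> C"
  shows "(\<Sum>c\<in>C. sum_list (map v (filter (\<lambda>x. cls x = c) xs))) = sum_list (map v xs)"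
  using assms(2)
proof (induction xs)
  case (Cons x xs)
  have "(\<Sum>c\<in>C. sum_list (map v (filter (\<lambda>y. cls y = c) (x # xs))))
      = (\<Sum>c\<in>C. (if cls x = c then v x else 0) + sum_list (map v (filter (\<lambda>y. cls y = c) xs)))"
    by (intro sum.cong) auto
  also have "\<dots> = v x + sum_list (map v xs)"
    using Cons assms(1) by (simp add: sum.distrib)
  finally show ?case by simp
qed simp

lemma rpap_bins_le:
  assumes run: "rpap_run \<alpha> pmax smin smax items G"
    and items: "\<forall>x\<in>set items. rclass_of pmax smin x \<in> rclasses smin smax
                              \<and> 0 \<le> rvalue \<alpha> pmax smin x"
  shows "real (rpap_bins \<alpha> pmax smin smax items G)
    \<le> 2 * sum_list (map (rvalue \<alpha> pmax smin) items) + real (card (rclasses smin smax))"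
proof -
  define C where "C = rclasses smin smax"
  define ri where "ri = routine_input \<alpha> pmax smin items"
  have "finite C" by (simp add: C_def rclasses_def)
  have "real (rpap_bins \<alpha> pmax smin smax items G) \<le> (\<Sum>c\<in>C. 2 * sum_list (ri c) + 1)"
    unfolding rpap_bins_def C_def[symmetric] ri_def[symmetric] of_nat_sum
  proof (rule sum_mono)
    fix c assume "c \<in> C"
    then have "anyfit (ri c) (G c)" using run unfolding rpap_run_def C_def ri_def by auto
    moreover have "\<forall>v\<in>set (ri c). 0 \<le> v" using items unfolding ri_def routine_input_def by auto
    ultimately show "real (num_bins (length (ri c)) (G c)) \<le> 2 * sum_list (ri c) + 1"
      by (rule anyfit_num_bins_le)
  qed
  also have "\<dots> = 2 * (\<Sum>c\<in>C. sum_list (ri c)) + real (card C)"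
    by (simp add: sum.distrib sum_distrib_left)
  also have "(\<Sum>c\<in>C. sum_list (ri c)) = sum_list (map (rvalue \<alpha> pmax smin) items)"
    unfolding ri_def routine_input_def
    by (rule sum_list_filter_classes[OF \<open>finite C\<close>]) (use items C_def in auto)
  finally show ?thesis by (simp add: C_def)
qed

lemma floor_le_ceiling_minus_1: "(a :: real) < b \<Longrightarrow> \<lfloor>a\<rfloor> \<le> \<lceil>b\<rceil> - 1"
  by (meson floor_less_iff le_ceiling_iff le_less_trans less_ceiling_iff not_less of_int_floor_le
      zle_diff1_eq)

lemma class_index_bounds:
  assumes "0 < smin" "smin < s" "s \<le> smax"
  shows "kmin smax \<le> nat \<lfloor>1 / s\<rfloor>" "nat \<lfloor>1 / s\<rfloor> \<le> kmax smin"
  using assms floor_le_ceiling_minus_1[of "1 / s" "1 / smin"]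
  unfolding kmin_def kmax_def by (auto intro!: nat_mono floor_mono simp: frac_le frac_less2)

lemma card_rclasses_le:
  assumes "0 < smin" "smin < smax"
  shows "real (card (rclasses smin smax)) \<le> real (kmax smin) - real (kmin smax) + 3"
proof -
  have "card (rclasses smin smax) \<le> card {Confident, Minor} + card (Regular ` {kmin smax..kmax smin})"
    unfolding rclasses_def by (rule card_Un_le)
  also have "\<dots> \<le> 2 + (kmax smin + 1 - kmin smax)"
    using card_image_le[of "{kmin smax..kmax smin}" Regular] by simp
  finally show ?thesis
    using class_index_bounds[OF assms order_refl] by linarith
qed

lemma rclass_of_mem_rclasses:
  assumes "0 < smin" "smin < smax" "snd x \<le> smax"
  shows "rclass_of pmax smin x \<in> rclasses smin smax"
  using class_index_bounds[of smin "snd x" smax] assms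
  by (auto simp: rclass_of_def rclasses_def)

lemma lam_pos: "0 < \<alpha> \<Longrightarrow> \<alpha> < 1 \<Longrightarrow> 0 < lam \<alpha> k"
  using poisson_cdf_Qinv[of "k + 1" "1 - \<alpha>"] by (simp add: lam_def)

lemma mu0_pos:
  assumes "0 < \<alpha>" "0 < smin"
  shows "0 < mu0 \<alpha> smin"
proof -
  have "smin\<^sup>2 + 4 * \<alpha> * smin < (2 * \<alpha> + smin)\<^sup>2"
    using assms by (simp add: power2_eq_square algebra_simps)
  then have "sqrt (smin\<^sup>2 + 4 * \<alpha> * smin) < 2 * \<alpha> + smin"
    using assms real_sqrt_less_mono by fastforce
  then show ?thesis using assms unfolding mu0_def by (simp add: field_simps)
qed

lemma rvalue_nonneg:
  assumes "0 < \<alpha>" "\<alpha> < 1" "0 < smin" "0 \<le> fst x" "fst x \<le> 1" "0 \<le> snd x"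
  shows "0 \<le> rvalue \<alpha> pmax smin x"
proof -
  have "0 \<le> ln (1 / (1 - fst x))"
    using assms(4,5) by (cases "fst x = 1") (auto intro!: ln_ge_zero simp: field_simps)
  then show ?thesis
    using assms lam_pos[of \<alpha>] mu0_pos[of \<alpha> smin]
    by (auto simp: rvalue_def rclass_of_def intro!: divide_nonneg_pos)
qed

lemma one_minus_mult_ln_inverse_le:
  fixes p :: real
  assumes "0 \<le> p" "p < 1"
  shows "(1 - p) * ln (1 / (1 - p)) \<le> p"
proof -
  have "(1 - p) * ln (1 / (1 - p)) \<le> (1 - p) * (1 / (1 - p) - 1)"
    using assms by (intro mult_left_mono ln_le_minus_one) auto
  also have "\<dots> = p" using assms by (simp add: field_simps)
  finally show ?thesis .
qed

definition mu_min :: "real \<Rightarrow> real \<Rightarrow> real \<Rightarrow> real \<Rightarrow> real" where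
  "mu_min \<alpha> pmax smin smax = (1 / 2) * min pmax (min (mu0 \<alpha> smin)
     ((1 - pmax) * (Qinv (kmin smax + 1) (1 - \<alpha>) / real (kmin smax + 1))))"

lemma mu_min_pos:
  assumes "0 < \<alpha>" "\<alpha> < 1" "0 < smin" "0 < pmax" "pmax < 1"
  shows "0 < mu_min \<alpha> pmax smin smax"
  using assms mu0_pos[of \<alpha> smin] lam_pos[of \<alpha> "kmin smax"]
  by (simp add: mu_min_def lam_def)

lemma regular_value_le:
  assumes \<alpha>: "0 < \<alpha>" "\<alpha> \<le> 1 / 2"
    and s: "0 < smin" "smin < s" "s \<le> smax"
    and p: "0 \<le> p" "p \<le> pmax" "pmax < 1"
  shows "(1 - pmax) * (lam \<alpha> (kmin smax) / real (kmin smax + 1))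
      * (ln (1 / (1 - p)) / lam \<alpha> (nat \<lfloor>1 / s\<rfloor>)) \<le> p * s"
proof -
  define k where "k = nat \<lfloor>1 / s\<rfloor>"
  define L where "L = ln (1 / (1 - p))"
  have "1 / s < real k + 1" using s by (simp add: k_def)
  then have sk: "1 / real (k + 1) \<le> s" using s by (simp add: field_simps)
  have "p < 1" and L: "0 \<le> L" using p by (auto simp: L_def)
  have lam: "0 < lam \<alpha> k" using lam_pos[of \<alpha> k] \<alpha> by simp
  have "lam \<alpha> (kmin smax) / real (kmin smax + 1) \<le> lam \<alpha> k / real (k + 1)"
    unfolding lam_def using Qinv_div_mono[of "1 - \<alpha>" "kmin smax + 1" "k + 1"]
      class_index_bounds(1)[OF s] \<alpha> by (simp add: k_def)
  then have "(1 - pmax) * (lam \<alpha> (kmin smax) / real (kmin smax + 1)) * (L / lam \<alpha> k)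
      \<le> (1 - pmax) * (lam \<alpha> k / real (k + 1)) * (L / lam \<alpha> k)"
    using L lam p by (intro mult_right_mono mult_left_mono) auto
  also have "\<dots> = (1 - pmax) * L / real (k + 1)" using lam by simp
  also have "\<dots> \<le> (1 - p) * L / real (k + 1)"
    using p L by (intro divide_right_mono mult_right_mono) auto
  also have "\<dots> \<le> p / real (k + 1)"
    using one_minus_mult_ln_inverse_le[of p] \<open>p < 1\<close> p by (simp add: L_def divide_right_mono)
  also have "\<dots> \<le> p * s" using sk p mult_left_mono[of "1 / real (k + 1)" s p] by simp
  finally show ?thesis by (simp add: L_def k_def)
qed

lemma mu_min_mult_rvalue_le:
  assumes \<alpha>: "0 < \<alpha>" "\<alpha> \<le> 1 / 2"
    and s: "0 < smin" "smin < smax" "0 < snd x" "snd x \<le> smax"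
    and p: "0 < pmax" "pmax < 1" "0 < fst x" "fst x \<le> 1"
  shows "2 * mu_min \<alpha> pmax smin smax * rvalue \<alpha> pmax smin x \<le> fst x * snd x"
proof -
  obtain p s where x: "x = (p, s)" by (cases x)
  define m where "m = 2 * mu_min \<alpha> pmax smin smax"
  have m_le: "m \<le> pmax" "m \<le> mu0 \<alpha> smin"
    "m \<le> (1 - pmax) * (lam \<alpha> (kmin smax) / real (kmin smax + 1))"
    by (simp_all add: m_def mu_min_def lam_def)
  have "0 \<le> rvalue \<alpha> pmax smin x"
    using rvalue_nonneg[of \<alpha> smin x pmax] \<alpha> s p by simp
  consider "pmax < p" | "p \<le> pmax" "s \<le> smin" | "p \<le> pmax" "smin < s" by linarith
  then show ?thesis
  proof cases
    case 1
    then show ?thesis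
      using m_le s x by (simp add: rvalue_def rclass_of_def m_def[symmetric] mult_right_mono)
  next
    case 2
    have "m * (p * s / mu0 \<alpha> smin) \<le> mu0 \<alpha> smin * (p * s / mu0 \<alpha> smin)"
      using m_le p s x mu0_pos[of \<alpha> smin] \<alpha> by (intro mult_right_mono) auto
    then show ?thesis
      using 2 x mu0_pos[of \<alpha> smin] \<alpha> s by (simp add: rvalue_def rclass_of_def m_def[symmetric])
  next
    case 3
    have "s \<le> smax" "0 \<le> p" using s p x by auto
    have "m * rvalue \<alpha> pmax smin x
        \<le> (1 - pmax) * (lam \<alpha> (kmin smax) / real (kmin smax + 1)) * rvalue \<alpha> pmax smin x"
      using m_le(3) \<open>0 \<le> rvalue \<alpha> pmax smin x\<close> by (rule mult_right_mono)
    also have "\<dots> \<le> p * s"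
      using 3 regular_value_le[OF \<alpha> s(1) 3(2) \<open>s \<le> smax\<close> \<open>0 \<le> p\<close> 3(1) p(2)]
      by (simp add: x rvalue_def rclass_of_def)
    finally show ?thesis by (simp add: m_def x)
  qed
qed

text \<open>The hypotheses bounding the values by \<open>1\<close> only ensure that RPAP can be run at all;
  given a run, the bound does not need them.\<close>
theorem theorem1:
  fixes \<alpha> smin smax pmax :: real and items :: "(real \<times> real) list"
    and G :: "rclass \<Rightarrow> nat \<Rightarrow> nat"
  assumes "0 < \<alpha>" "\<alpha> \<le> 1 / 2"
    and "0 < smin" "smin < smax" "smax \<le> 1"
    and "0 < pmax" "pmax < 1"
    and "pmax * smin \<le> mu0 \<alpha> smin"
    and "ln (1 / (1 - pmax)) \<le> lam \<alpha> (kmin smax)"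
    and "\<forall>x \<in> set items. 0 < fst x \<and> fst x \<le> 1 \<and> 0 < snd x \<and> snd x \<le> smax"
    and "rpap_run \<alpha> pmax smin smax items G"
  shows "real (rpap_bins \<alpha> pmax smin smax items G)
    \<le> (1 + \<alpha>) / ((1 - \<alpha>) * ((1 / 2) * min pmax (min (mu0 \<alpha> smin)
            ((1 - pmax) * (Qinv (kmin smax + 1) (1 - \<alpha>) / real (kmin smax + 1))))))
        * real (OPT \<alpha> items)
      + real (kmax smin) - real (kmin smax) + 3"
proof -
  define m where "m = mu_min \<alpha> pmax smin smax"
  define V where "V = sum_list (map (rvalue \<alpha> pmax smin) items)"
  have "0 < m" using mu_min_pos assms by (simp add: m_def)
  have items01: "\<forall>x \<in> set items. 0 \<le> fst x \<and> fst x \<le> 1 \<and> 0 \<le> snd x \<and> snd x \<le> 1"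
    using assms(5,10) by auto
  have bins: "real (rpap_bins \<alpha> pmax smin smax items G) \<le> 2 * V + real (kmax smin) - real (kmin smax) + 3"
    using rpap_bins_le[OF assms(11)] card_rclasses_le[OF assms(3,4)]
      rclass_of_mem_rclasses[OF assms(3,4)] rvalue_nonneg[of \<alpha> smin] assms(1,2,3,10)
    by (fastforce simp: V_def)
  have "2 * m * V \<le> mean_load items"
    unfolding V_def mean_load_def sum_list_const_mult[symmetric]
    using mu_min_mult_rvalue_le[OF assms(1,2,3,4) _ _ assms(6,7)] assms(10)
    by (intro sum_list_mono) (auto simp: m_def)
  also have "\<dots> \<le> (1 + \<alpha>) / (1 - \<alpha>) * real (OPT \<alpha> items)"
    using mean_load_le_OPT[OF items01] assms(1,2) by simp
  finally have "2 * V \<le> (1 + \<alpha>) / (1 - \<alpha>) * real (OPT \<alpha> items) / m"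
    by (intro pos_le_divide_eq[OF \<open>0 < m\<close>, THEN iffD2]) (simp add: mult_ac)
  also have "\<dots> = (1 + \<alpha>) / ((1 - \<alpha>) * m) * real (OPT \<alpha> items)"
    by simp
  finally show ?thesis using bins unfolding m_def mu_min_def by linarith
qed

end
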